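(* For all integers $a\ge0$, $b\ge0$ and $d\ge1$, $$\sum_{c=0}^{b}\binom{b}{c}(2c+d-2)!!\,(2(a+b-c)+1)!!=\frac{(2a+1)!!\,(d-2)!!\,(2(a+b)+d+1)!!}{(2a+d+1)!!}.$$
   Context: $n!!$ denotes the double factorial, with the conventions $0!!=(-1)!!=1$. *)

theory Defs
  imports Complex_Main
begin

text \<open>Double factorial n!! for integers n, with the conventions 0!! = (-1)!! = 1
  (and, as a total extension, n!! = 1 for all n \<le> 0).\<close>
function dfact :: "int \<Rightarrow> nat" where
  "dfact n = (if n \<le> 0 then 1 else nat n * dfact (n - 2))"
  by auto
termination by (relation "measure (\<lambda>n. nat n)") auto

declare dfact.simps[simp del]

end

theory Submission
  imports Defs
begin

text \<open>Write \<open>S a b d\<close> for the left-hand side. Pascal's rule splits \<open>S a (b + 1) d\<close> into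
  \<open>S (a + 1) b d + S a b (d + 2)\<close>, and the right-hand side obeys the same recurrence: relative
  to the common value \<open>(2a+1)!! (d-2)!! (2(a+b)+d+3)!! / (2a+d+3)!!\<close> the two terms carry the
  factors \<open>2a + 3\<close> and \<open>d\<close>, which add up to the factor \<open>2a + d + 3\<close> of the right-hand side
  for \<open>b + 1\<close>.\<close>

lemma dfact_pos: "dfact n > 0"
proof (induction n rule: dfact.induct)
  case (1 n)
  then show ?case by (subst dfact.simps) auto
qed

lemma dfact_rec: "n > 0 \<Longrightarrow> dfact n = nat n * dfact (n - 2)"
  by (subst dfact.simps) simp

lemma dfact_add2: "n \<ge> -1 \<Longrightarrow> dfact (n + 2) = nat (n + 2) * dfact n"
  using dfact_rec[of "n + 2"] by simp

lemma binomial_convolution_Suc: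
  fixes f :: "nat \<Rightarrow> nat \<Rightarrow> 'a :: comm_semiring_1"
  shows "(\<Sum>c\<le>Suc b. of_nat (Suc b choose c) * f c (Suc b - c))
       = (\<Sum>c\<le>b. of_nat (b choose c) * f c (Suc (b - c)))
       + (\<Sum>c\<le>b. of_nat (b choose c) * f (Suc c) (b - c))"
proof -
  have "(\<Sum>c\<le>Suc b. of_nat (Suc b choose c) * f c (Suc b - c))
      = f 0 (Suc b) + (\<Sum>c\<le>b. of_nat (b choose Suc c) * f (Suc c) (b - c))
          + (\<Sum>c\<le>b. of_nat (b choose c) * f (Suc c) (b - c))"
    by (subst sum.atMost_Suc_shift) (simp add: sum.distrib algebra_simps)
  also have "f 0 (Suc b) + (\<Sum>c\<le>b. of_nat (b choose Suc c) * f (Suc c) (b - c))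
      = (\<Sum>c\<le>Suc b. of_nat (b choose c) * f c (Suc b - c))"
    by (subst sum.atMost_Suc_shift) simp
  also have "\<dots> = (\<Sum>c\<le>b. of_nat (b choose c) * f c (Suc (b - c)))"
    by (simp add: Suc_diff_le binomial_eq_0)
  finally show ?thesis .
qed

definition dfact_binomial_sum :: "nat \<Rightarrow> nat \<Rightarrow> int \<Rightarrow> real" where
  "dfact_binomial_sum a b d = (\<Sum>c\<le>b. real (b choose c)
      * (real (dfact (2 * int c + d - 2)) * real (dfact (2 * int (a + (b - c)) + 1))))"

lemma dfact_binomial_sum_Suc:
  "dfact_binomial_sum a (Suc b) d = dfact_binomial_sum (Suc a) b d + dfact_binomial_sum a b (d + 2)"
  using binomial_convolution_Suc[of b
      "\<lambda>c k. real (dfact (2 * int c + d - 2)) * real (dfact (2 * int (a + k) + 1))"]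
  by (simp add: dfact_binomial_sum_def algebra_simps)

lemma dfact_binomial_sum_closed_form:
  assumes "d \<ge> 1"
  shows "dfact_binomial_sum a b d * real (dfact (2 * int a + d + 1))
       = real (dfact (2 * int a + 1)) * real (dfact (d - 2)) * real (dfact (2 * int (a + b) + d + 1))"
  using assms
proof (induction b arbitrary: a d)
  case 0
  then show ?case by (simp add: dfact_binomial_sum_def)
next
  case (Suc b)
  define A where "A = real (dfact (2 * int a + 1))"
  define D where "D = real (dfact (d - 2))"
  define E where "E = real (dfact (2 * int (a + b) + d + 3))"
  define F where "F = real (dfact (2 * int a + d + 1))"
  have F_rec: "real (dfact (2 * int a + d + 3)) = (2 * a + d + 3) * F"
    using Suc.prems dfact_add2[of "2 * int a + d + 1"] by (simp add: F_def add.assoc)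
  have A_rec: "real (dfact (2 * int (Suc a) + 1)) = (2 * a + 3) * A"
    using dfact_add2[of "2 * int a + 1"] by (simp add: A_def algebra_simps)
  have D_rec: "real (dfact (d + 2 - 2)) = d * D"
    using Suc.prems dfact_rec[of d] by (simp add: D_def)
  have IH_a: "dfact_binomial_sum (Suc a) b d * real (dfact (2 * int a + d + 3)) = (2 * a + 3) * A * D * E"
    using Suc.IH[of d "Suc a"] Suc.prems A_rec by (simp add: D_def E_def algebra_simps)
  have IH_d: "dfact_binomial_sum a b (d + 2) * real (dfact (2 * int a + d + 3)) = A * (d * D) * E"
    using Suc.IH[of "d + 2" a] Suc.prems D_rec by (simp add: A_def E_def algebra_simps)
  have "dfact_binomial_sum a (Suc b) d * real (dfact (2 * int a + d + 3))
      = dfact_binomial_sum (Suc a) b d * real (dfact (2 * int a + d + 3))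
        + dfact_binomial_sum a b (d + 2) * real (dfact (2 * int a + d + 3))"
    by (simp add: dfact_binomial_sum_Suc distrib_right)
  also have "\<dots> = (2 * a + d + 3) * (A * D * E)"
    unfolding IH_a IH_d by (simp add: algebra_simps)
  finally have "dfact_binomial_sum a (Suc b) d * F = A * D * E"
    using Suc.prems by (simp add: F_rec)
  then show ?case
    by (simp add: A_def D_def E_def F_def algebra_simps)
qed

theorem lemma3p5:
  fixes a b d :: int
  assumes "a \<ge> 0" and "b \<ge> 0" and "d \<ge> 1"
  shows "(\<Sum>c=0..b. real (nat b choose nat c) * real (dfact (2*c + d - 2))
            * real (dfact (2*(a + b - c) + 1)))
         = real (dfact (2*a + 1)) * real (dfact (d - 2)) * real (dfact (2*(a + b) + d + 1))
           / real (dfact (2*a + d + 1))"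
proof -
  obtain m n where a: "a = int m" and b: "b = int n"
    using assms(1,2) by (metis nonneg_int_cases)
  have "{0..b} = int ` {..n}"
    by (simp add: b atLeast0AtMost[symmetric] image_int_atLeastAtMost)
  then have "(\<Sum>c=0..b. real (nat b choose nat c) * real (dfact (2*c + d - 2))
            * real (dfact (2*(a + b - c) + 1))) = dfact_binomial_sum m n d"
    by (simp add: dfact_binomial_sum_def sum.reindex a b of_nat_diff algebra_simps)
  with dfact_binomial_sum_closed_form[OF assms(3), of m n] dfact_pos[of "2*a + d + 1"] show ?thesis
    by (simp add: a b field_simps)
qed

end
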